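(* Let $(\Gamma,\lambda)$ and $(G,\nu)$ be $\sigma$-compact lcH-groupoids endowed with Haar systems, and let $h:(\Gamma,\lambda)\to(G,\nu)$ be a morphism, with $\Delta_h$ a continuous positive function on $G\rtimes_h\Gamma$ as in condition (6) below. Then $\Delta_h(x,\gamma)=\Delta_h(r(x),\gamma)$ for all $(x,\gamma)\in G\rtimes_h\Gamma$.
   Context: An lcH-groupoid is a groupoid with a locally compact Hausdorff topology for which inversion and multiplication (on composable pairs, relative product topology) are continuous; $r(x)=xx^{-1}$, $d(x)=x^{-1}x$, $G^t=r^{-1}(t)$, $G_t=d^{-1}(t)$. A Haar system on $G$ is a family $\nu=\{\nu^t\}_{t\in G^{(0)}}$ of positive Radon measures with $\mathrm{supp}\,\nu^t=G^t$, $t\mapsto\int f\,d\nu^t$ continuous for each $f\in C_c(G)$, and $\int f(y)d\nu^{r(x)}(y)=\int f(xy)d\nu^{d(x)}(y)$; $\nu_t$ denotes the image of $\nu^t$ under $x\mapsto x^{-1}$. A continuous morphism $h$ from $\Gamma$ to $G$ consists of a continuous map $\rho_h:G^{(0)}\to\Gamma^{(0)}$ and a continuous map $(\gamma,x)\mapsto\gamma\cdot_hx$ from $\Gamma\star_hG=\{(\gamma,x)\in\Gamma\times G:d(\gamma)=\rho_h(r(x))\}$ (relative product topology) to $G$ such that: (1) $\rho_h(r(\gamma\cdot_hx))=r(\gamma)$; (2) $\rho_h(r(x))\cdot_hx=x$; (3) $(\gamma_1\gamma_2)\cdot_hx=\gamma_1\cdot_h(\gamma_2\cdot_hx)$ for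 composable $\gamma_1,\gamma_2$ with $(\gamma_2,x)\in\Gamma\star_hG$; (4) $d(\gamma\cdot_hx)=d(x)$; (5) $(\gamma\cdot_hx_1)x_2=\gamma\cdot_h(x_1x_2)$ when $(x_1,x_2)$ composable. Let $G\rtimes_h\Gamma=\{(x,\gamma)\in G\times\Gamma:\rho_h(r(x))=r(\gamma)\}$. A morphism $h:(\Gamma,\lambda)\to(G,\nu)$ is such a continuous morphism satisfying (6): there is a continuous positive function $\Delta_h$ on $G\rtimes_h\Gamma$ with $\int\int g(\gamma^{-1}\cdot_hx,\gamma^{-1})\Delta_h(\gamma^{-1}\cdot_hx,\gamma^{-1})\,d\lambda^{\rho_h(r(x))}(\gamma)\,d\nu_t(x)=\int\int g(x,\gamma)\,d\lambda^{\rho_h(r(x))}(\gamma)\,d\nu_t(x)$ for all $t\in G^{(0)}$ and all Borel $g\ge0$ on $G\rtimes_h\Gamma$. *)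

theory Defs
  imports "HOL-Analysis.Analysis"
begin

section \<open>Groupoids (elements = all elements of a type)\<close>

text \<open>A groupoid is given by a multiplication (only meaningful on composable
pairs) and an inversion.  Range and source maps: r x = x x^-1, d x = x^-1 x.
A pair (x,y) is composable iff d x = r y.\<close>

definition g_r :: "('a \<Rightarrow> 'a \<Rightarrow> 'a) \<Rightarrow> ('a \<Rightarrow> 'a) \<Rightarrow> 'a \<Rightarrow> 'a" where
  "g_r gm gi x = gm x (gi x)"

definition g_d :: "('a \<Rightarrow> 'a \<Rightarrow> 'a) \<Rightarrow> ('a \<Rightarrow> 'a) \<Rightarrow> 'a \<Rightarrow> 'a" where
  "g_d gm gi x = gm (gi x) x"

definition g_units :: "('a \<Rightarrow> 'a \<Rightarrow> 'a) \<Rightarrow> ('a \<Rightarrow> 'a) \<Rightarrow> 'a set" where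
  "g_units gm gi = range (g_r gm gi)"

definition g_comp :: "('a \<Rightarrow> 'a \<Rightarrow> 'a) \<Rightarrow> ('a \<Rightarrow> 'a) \<Rightarrow> ('a \<times> 'a) set" where
  "g_comp gm gi = {(x, y). g_d gm gi x = g_r gm gi y}"

definition groupoid :: "('a \<Rightarrow> 'a \<Rightarrow> 'a) \<Rightarrow> ('a \<Rightarrow> 'a) \<Rightarrow> bool" where
  "groupoid gm gi \<longleftrightarrow>
     (\<forall>x. gi (gi x) = x) \<and>
     (\<forall>x y z. (x, y) \<in> g_comp gm gi \<and> (y, z) \<in> g_comp gm gi \<longrightarrow>
        (gm x y, z) \<in> g_comp gm gi \<and> (x, gm y z) \<in> g_comp gm gi \<and>
        gm (gm x y) z = gm x (gm y z)) \<and>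
     (\<forall>x y. (x, y) \<in> g_comp gm gi \<longrightarrow> gm (gi x) (gm x y) = y) \<and>
     (\<forall>z x. (z, x) \<in> g_comp gm gi \<longrightarrow> gm (gm z x) (gi x) = z)"

definition lcH_groupoid :: "('a::t2_space \<Rightarrow> 'a \<Rightarrow> 'a) \<Rightarrow> ('a \<Rightarrow> 'a) \<Rightarrow> bool" where
  "lcH_groupoid gm gi \<longleftrightarrow>
     groupoid gm gi \<and>
     locally_compact_space (euclidean :: 'a topology) \<and>
     continuous_on UNIV gi \<and>
     continuous_on (g_comp gm gi) (\<lambda>p. gm (fst p) (snd p))"

definition sigma_compact_type :: "'a::topological_space itself \<Rightarrow> bool" where
  "sigma_compact_type _ \<longleftrightarrow>
     (\<exists>F :: 'a set set. countable F \<and> (\<forall>K\<in>F. compact K) \<and> \<Union>F = UNIV)"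

definition radon_measure :: "'a::topological_space measure \<Rightarrow> bool" where
  "radon_measure M \<longleftrightarrow>
     sets M = sets borel \<and>
     (\<forall>K. compact K \<longrightarrow> emeasure M K < \<infinity>) \<and>
     (\<forall>A \<in> sets borel. emeasure M A = (INF U \<in> {U. open U \<and> A \<subseteq> U}. emeasure M U)) \<and>
     (\<forall>U. open U \<longrightarrow> emeasure M U = (SUP K \<in> {K. compact K \<and> K \<subseteq> U}. emeasure M K))"

definition msupport :: "'a::topological_space measure \<Rightarrow> 'a set" where
  "msupport M = {x. \<forall>U. open U \<and> x \<in> U \<longrightarrow> emeasure M U > 0}"

definition Cc :: "('a::topological_space \<Rightarrow> real) set" where
  "Cc = {f. continuous_on UNIV f \<and> (\<exists>K. compact K \<and> (\<forall>x. x \<notin> K \<longrightarrow> f x = 0))}"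

definition haar_system ::
  "('a::t2_space \<Rightarrow> 'a \<Rightarrow> 'a) \<Rightarrow> ('a \<Rightarrow> 'a) \<Rightarrow> ('a \<Rightarrow> 'a measure) \<Rightarrow> bool" where
  "haar_system gm gi nu \<longleftrightarrow>
     (\<forall>t \<in> g_units gm gi. radon_measure (nu t) \<and>
         msupport (nu t) = {x. g_r gm gi x = t}) \<and>
     (\<forall>f \<in> Cc. continuous_on (g_units gm gi) (\<lambda>t. integral\<^sup>L (nu t) f)) \<and>
     (\<forall>f \<in> Cc. \<forall>x.
        (\<integral>y. f y \<partial>nu (g_r gm gi x)) = (\<integral>y. f (gm x y) \<partial>nu (g_d gm gi x)))"

definition haar_lower :: "('a::topological_space \<Rightarrow> 'a) \<Rightarrow> ('a \<Rightarrow> 'a measure) \<Rightarrow> 'a \<Rightarrow> 'a measure" where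
  "haar_lower gi nu t = distr (nu t) borel gi"

text \<open>Gamma (type 'g, multGa, invGa) and G (type 'a, multG, invG).
rho : G^(0) \<rightarrow> Gamma^(0), act : Gamma \<star>_h G \<rightarrow> G.\<close>

definition star_h ::
  "('g \<Rightarrow> 'g \<Rightarrow> 'g) \<Rightarrow> ('g \<Rightarrow> 'g) \<Rightarrow> ('a \<Rightarrow> 'a \<Rightarrow> 'a) \<Rightarrow> ('a \<Rightarrow> 'a) \<Rightarrow> ('a \<Rightarrow> 'g) \<Rightarrow> ('g \<times> 'a) set" where
  "star_h multGa invGa multG invG rho =
     {(\<gamma>, x). g_d multGa invGa \<gamma> = rho (g_r multG invG x)}"

definition semidirect_h ::
  "('g \<Rightarrow> 'g \<Rightarrow> 'g) \<Rightarrow> ('g \<Rightarrow> 'g) \<Rightarrow> ('a \<Rightarrow> 'a \<Rightarrow> 'a) \<Rightarrow> ('a \<Rightarrow> 'a) \<Rightarrow> ('a \<Rightarrow> 'g) \<Rightarrow> ('a \<times> 'g) set" where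
  "semidirect_h multGa invGa multG invG rho =
     {(x, \<gamma>). rho (g_r multG invG x) = g_r multGa invGa \<gamma>}"

definition continuous_morphism ::
  "('g::topological_space \<Rightarrow> 'g \<Rightarrow> 'g) \<Rightarrow> ('g \<Rightarrow> 'g) \<Rightarrow>
   ('a::topological_space \<Rightarrow> 'a \<Rightarrow> 'a) \<Rightarrow> ('a \<Rightarrow> 'a) \<Rightarrow>
   ('a \<Rightarrow> 'g) \<Rightarrow> ('g \<Rightarrow> 'a \<Rightarrow> 'a) \<Rightarrow> bool" where
  "continuous_morphism multGa invGa multG invG rho act \<longleftrightarrow>
     rho ` g_units multG invG \<subseteq> g_units multGa invGa \<and>
     continuous_on (g_units multG invG) rho \<and>
     continuous_on (star_h multGa invGa multG invG rho) (\<lambda>p. act (fst p) (snd p)) \<and>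
     (\<forall>(\<gamma>, x) \<in> star_h multGa invGa multG invG rho.
        rho (g_r multG invG (act \<gamma> x)) = g_r multGa invGa \<gamma>) \<and>
     (\<forall>x. act (rho (g_r multG invG x)) x = x) \<and>
     (\<forall>\<gamma>1 \<gamma>2 x. (\<gamma>1, \<gamma>2) \<in> g_comp multGa invGa \<and>
          (\<gamma>2, x) \<in> star_h multGa invGa multG invG rho \<longrightarrow>
          act (multGa \<gamma>1 \<gamma>2) x = act \<gamma>1 (act \<gamma>2 x)) \<and>
     (\<forall>(\<gamma>, x) \<in> star_h multGa invGa multG invG rho.
        g_d multG invG (act \<gamma> x) = g_d multG invG x) \<and>
     (\<forall>\<gamma> x1 x2. (\<gamma>, x1) \<in> star_h multGa invGa multG invG rho \<and>
          (x1, x2) \<in> g_comp multG invG \<longrightarrow>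
          multG (act \<gamma> x1) x2 = act \<gamma> (multG x1 x2))"

text \<open>Condition (6) with the given function Delta.\<close>
definition morphism_modular ::
  "('g::topological_space \<Rightarrow> 'g \<Rightarrow> 'g) \<Rightarrow> ('g \<Rightarrow> 'g) \<Rightarrow> ('g \<Rightarrow> 'g measure) \<Rightarrow>
   ('a::topological_space \<Rightarrow> 'a \<Rightarrow> 'a) \<Rightarrow> ('a \<Rightarrow> 'a) \<Rightarrow> ('a \<Rightarrow> 'a measure) \<Rightarrow>
   ('a \<Rightarrow> 'g) \<Rightarrow> ('g \<Rightarrow> 'a \<Rightarrow> 'a) \<Rightarrow> ('a \<Rightarrow> 'g \<Rightarrow> real) \<Rightarrow> bool" where
  "morphism_modular multGa invGa lam multG invG nu rho act Delta \<longleftrightarrow>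
     continuous_on (semidirect_h multGa invGa multG invG rho) (\<lambda>p. Delta (fst p) (snd p)) \<and>
     (\<forall>(x, \<gamma>) \<in> semidirect_h multGa invGa multG invG rho. Delta x \<gamma> > 0) \<and>
     (\<forall>t \<in> g_units multG invG. \<forall>g :: 'a \<times> 'g \<Rightarrow> real.
        g \<in> borel_measurable (restrict_space borel (semidirect_h multGa invGa multG invG rho)) \<and>
        (\<forall>p. g p \<ge> 0) \<longrightarrow>
        (\<integral>\<^sup>+ x. (\<integral>\<^sup>+ \<gamma>. ennreal (g (act (invGa \<gamma>) x, invGa \<gamma>) *
                                   Delta (act (invGa \<gamma>) x) (invGa \<gamma>))
                    \<partial>lam (rho (g_r multG invG x))) \<partial>haar_lower invG nu t)
        = (\<integral>\<^sup>+ x. (\<integral>\<^sup>+ \<gamma>. ennreal (g (x, \<gamma>)) \<partial>lam (rho (g_r multG invG x)))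
              \<partial>haar_lower invG nu t))"

definition haar_morphism ::
  "('g::topological_space \<Rightarrow> 'g \<Rightarrow> 'g) \<Rightarrow> ('g \<Rightarrow> 'g) \<Rightarrow> ('g \<Rightarrow> 'g measure) \<Rightarrow>
   ('a::topological_space \<Rightarrow> 'a \<Rightarrow> 'a) \<Rightarrow> ('a \<Rightarrow> 'a) \<Rightarrow> ('a \<Rightarrow> 'a measure) \<Rightarrow>
   ('a \<Rightarrow> 'g) \<Rightarrow> ('g \<Rightarrow> 'a \<Rightarrow> 'a) \<Rightarrow> ('a \<Rightarrow> 'g \<Rightarrow> real) \<Rightarrow> bool" where
  "haar_morphism multGa invGa lam multG invG nu rho act Delta \<longleftrightarrow>
     continuous_morphism multGa invGa multG invG rho act \<and>
     morphism_modular multGa invGa lam multG invG nu rho act Delta"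

end

theory Submission
  imports Defs
begin

(* Write iota(x, gamma) = (gamma^-1 . x, gamma^-1) for the inversion in the semidirect product
   groupoid G x_h Gamma, and for open U in G, W in Gamma and a unit t put
     m_t(U, W) = integral of 1_U(x) lambda^{rho(r x)}(W) d nu_t(x).
   Condition (6), applied to the indicator of iota^-1(U x W) divided by Delta, says
     m_t(U, W) = integral of integral of 1_{U x W}(iota p) / F(iota p)
   with the weight F = Delta o iota.  If t = r y, transporting the box by the right translation
   x |-> x y, which carries nu_{r y} to nu_{d y}, gives the same identity with the weight
   F_y(q) = Delta(fst (iota q) y, snd (iota q)); for y = r x this is Delta o iota again.
   So F_{r x} and F_x are continuous positive weights reproducing the same box masses m_t.  These
   are positive and finite for small boxes around every point of the fibre over t, so the weights
   agree there, and at q = iota(r x, gamma) this is Delta(r x, gamma) = Delta(x, gamma).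

   Right invariance of nu_t needs the Haar invariance as an identity of measures rather than of
   integrals of C_c functions.  Radon regularity gives that the image of nu^{d z} under left
   translation by z is dominated by nu^{r z}; applied to z^-1 as well, this yields equality. *)

section \<open>Groupoid algebra\<close>

locale algebraic_groupoid =
  fixes gm :: "'a \<Rightarrow> 'a \<Rightarrow> 'a" and gi :: "'a \<Rightarrow> 'a"
  assumes groupoid: "groupoid gm gi"
begin

abbreviation r :: "'a \<Rightarrow> 'a" where "r \<equiv> g_r gm gi"
abbreviation d :: "'a \<Rightarrow> 'a" where "d \<equiv> g_d gm gi"

lemma comp_iff: "(x, y) \<in> g_comp gm gi \<longleftrightarrow> d x = r y"
  by (simp add: g_comp_def)

lemma inv_inv [simp]: "gi (gi x) = x"
  using groupoid unfolding groupoid_def by blast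

lemma r_inv [simp]: "r (gi x) = d x"
  by (simp add: g_r_def g_d_def)

lemma d_inv [simp]: "d (gi x) = r x"
  by (simp add: g_r_def g_d_def)

lemma comp_inv_right [simp]: "(x, gi x) \<in> g_comp gm gi"
  by (simp add: comp_iff)

lemma comp_inv_left [simp]: "(gi x, x) \<in> g_comp gm gi"
  by (simp add: comp_iff)

lemma assoc:
  "(x, y) \<in> g_comp gm gi \<Longrightarrow> (y, z) \<in> g_comp gm gi \<Longrightarrow>
   (gm x y, z) \<in> g_comp gm gi \<and> (x, gm y z) \<in> g_comp gm gi \<and> gm (gm x y) z = gm x (gm y z)"
  using groupoid unfolding groupoid_def by blast

lemma cancel_left: "(x, y) \<in> g_comp gm gi \<Longrightarrow> gm (gi x) (gm x y) = y"
  using groupoid unfolding groupoid_def by blast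

lemma cancel_right: "(z, x) \<in> g_comp gm gi \<Longrightarrow> gm (gm z x) (gi x) = z"
  using groupoid unfolding groupoid_def by blast

lemma r_mult_self [simp]: "gm (r x) x = x"
  using cancel_right[OF comp_inv_right[of x]] by (simp add: g_r_def)

lemma d_mult: "(x, y) \<in> g_comp gm gi \<Longrightarrow> d (gm x y) = d y"
  using assoc[OF _ comp_inv_right[of y], of x] by (simp add: comp_iff)

lemma r_mult: "(x, y) \<in> g_comp gm gi \<Longrightarrow> r (gm x y) = r x"
  using assoc[OF comp_inv_left[of x], of y] by (simp add: comp_iff)

lemma r_r [simp]: "r (r x) = r x"
  using r_mult[OF comp_inv_right[of x]] by (simp add: g_r_def)

lemma d_r [simp]: "d (r x) = r x"
  using d_mult[OF comp_inv_right[of x]] by (simp add: g_r_def)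

lemma inv_mult:
  assumes xy: "(x, y) \<in> g_comp gm gi"
  shows "gi (gm x y) = gm (gi y) (gi x)"
proof -
  let ?p = "gm x y" and ?q = "gm (gi y) (gi x)"
  have yx: "(gi y, gi x) \<in> g_comp gm gi" using xy by (simp add: comp_iff)
  have qp: "(?q, ?p) \<in> g_comp gm gi" using xy yx by (simp add: comp_iff d_mult r_mult)
  have "gm ?q ?p = gm (gi y) (gm (gi x) ?p)"
    using assoc[OF yx, of ?p] xy by (simp add: comp_iff r_mult)
  also have "\<dots> = gm (gi ?p) ?p" using xy by (simp add: cancel_left d_mult flip: g_d_def)
  finally have "gm (gm ?q ?p) (gi ?p) = gm (gm (gi ?p) ?p) (gi ?p)" by simp
  then show ?thesis using cancel_right[OF qp] cancel_right[of "gi ?p" ?p] by (simp add: comp_iff)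
qed

end

section \<open>Nonnegative integrals and measurability\<close>

(* Integrands such as x |-> lambda^{rho(r x)}(W) are not known to be measurable, so the following
   facts about nonnegative integrals avoid measurability hypotheses. *)
lemma nn_integral_le_of_measurable_le:
  assumes "\<And>g. g \<in> borel_measurable M \<Longrightarrow> (\<And>x. g x \<le> f x) \<Longrightarrow> integral\<^sup>N M g \<le> c"
  shows "integral\<^sup>N M f \<le> c"
  unfolding nn_integral_def
proof (rule SUP_least)
  fix g assume g: "g \<in> {g. simple_function M g \<and> g \<le> f}"
  then have "integral\<^sup>S M g = integral\<^sup>N M g" by (simp add: nn_integral_eq_simple_integral)
  also have "\<dots> \<le> c" using g by (intro assms) (auto simp: borel_measurable_simple_function le_fun_def)
  finally show "integral\<^sup>S M g \<le> c" .
qed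

lemma nn_integral_cmult_le:
  fixes a :: real
  assumes "0 < a"
  shows "(\<integral>\<^sup>+ x. ennreal a * f x \<partial>M) \<le> ennreal a * integral\<^sup>N M f"
proof (rule nn_integral_le_of_measurable_le)
  have inv: "ennreal a * ennreal (1/a) = 1"
    using assms by (simp flip: ennreal_mult)
  fix g assume g: "g \<in> borel_measurable M" and g_le: "\<And>x. g x \<le> ennreal a * f x"
  have "g x * ennreal (1/a) \<le> f x" for x
  proof -
    have "g x * ennreal (1/a) \<le> ennreal a * f x * ennreal (1/a)"
      using g_le[of x] by (intro mult_right_mono) auto
    also have "\<dots> = f x * (ennreal a * ennreal (1/a))" by (simp add: ac_simps)
    finally show ?thesis using inv by simp
  qed
  then have "ennreal a * (\<integral>\<^sup>+ x. g x * ennreal (1/a) \<partial>M) \<le> ennreal a * integral\<^sup>N M f"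
    by (intro mult_left_mono nn_integral_mono) auto
  moreover have "ennreal a * (\<integral>\<^sup>+ x. g x * ennreal (1/a) \<partial>M) = integral\<^sup>N M g * (ennreal a * ennreal (1/a))"
    using g by (simp add: nn_integral_multc ac_simps)
  ultimately show "integral\<^sup>N M g \<le> ennreal a * integral\<^sup>N M f" using inv by simp
qed

lemma nn_integral_distr_invertible:
  assumes T: "T \<in> measurable M N" and T': "T' \<in> measurable N M" and D: "D \<in> sets N"
    and T_T': "\<And>y. y \<in> D \<Longrightarrow> T (T' y) = y"
    and T'_T: "AE x in M. T x \<in> D \<and> T' (T x) = x"
  shows "integral\<^sup>N (distr M N T) F = (\<integral>\<^sup>+ x. F (T x) \<partial>M)"
proof (rule antisym)
  show "integral\<^sup>N (distr M N T) F \<le> (\<integral>\<^sup>+ x. F (T x) \<partial>M)"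
  proof (rule nn_integral_le_of_measurable_le)
    fix g assume g: "g \<in> borel_measurable (distr M N T)" "\<And>x. g x \<le> F x"
    then have "integral\<^sup>N (distr M N T) g = (\<integral>\<^sup>+ x. g (T x) \<partial>M)"
      using T by (intro nn_integral_distr) auto
    also have "\<dots> \<le> (\<integral>\<^sup>+ x. F (T x) \<partial>M)" using g by (intro nn_integral_mono) auto
    finally show "integral\<^sup>N (distr M N T) g \<le> (\<integral>\<^sup>+ x. F (T x) \<partial>M)" .
  qed
next
  show "(\<integral>\<^sup>+ x. F (T x) \<partial>M) \<le> integral\<^sup>N (distr M N T) F"
  proof (rule nn_integral_le_of_measurable_le)
    fix g assume g: "g \<in> borel_measurable M" and g_le: "\<And>x. g x \<le> F (T x)"
    define g' where "g' y = g (T' y) * indicator D y" for y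
    have g': "g' \<in> borel_measurable N" unfolding g'_def using g T' D by measurable
    have "integral\<^sup>N M g = (\<integral>\<^sup>+ x. g' (T x) \<partial>M)"
      by (rule nn_integral_cong_AE) (use T'_T in \<open>auto simp: g'_def\<close>)
    also have "\<dots> = integral\<^sup>N (distr M N T) g'"
      using g' T by (intro nn_integral_distr[symmetric]) auto
    also have "\<dots> \<le> integral\<^sup>N (distr M N T) F"
    proof (rule nn_integral_mono)
      fix y show "g' y \<le> F y"
        using g_le[of "T' y"] T_T'[of y] by (auto simp: g'_def indicator_def)
    qed
    finally show "integral\<^sup>N M g \<le> integral\<^sup>N (distr M N T) F" .
  qed
qed

lemma ennreal_le_scaled_imp_zero_or_top:
  fixes X :: ennreal and c :: real
  assumes "X \<le> ennreal (1/c) * X" and "1 < c"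
  shows "X = 0 \<or> X = \<infinity>"
proof (cases X)
  case (real x)
  then have "ennreal x \<le> ennreal (x / c)"
    using assms by (simp flip: ennreal_mult)
  then have "x * c \<le> x"
    using real assms by (simp add: ennreal_le_iff pos_le_divide_eq)
  then have "x * (c - 1) \<le> 0"
    by (simp add: algebra_simps)
  then show ?thesis
    using real assms by (simp add: mult_le_0_iff)
qed simp

lemma borel_measurable_indicator_divide_on_closed:
  fixes \<Theta> :: "'x::topological_space \<Rightarrow> 'y::topological_space"
  assumes C: "closed C" and \<Theta>: "continuous_on C \<Theta>" and w: "continuous_on C w" and B: "open B"
  shows "(\<lambda>p. if p \<in> C then indicator B (\<Theta> p) / w p else 0 :: real) \<in> borel_measurable borel"
proof -
  have "\<Theta> \<in> borel_measurable (restrict_space borel C)" "w \<in> borel_measurable (restrict_space borel C)"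
    using \<Theta> w by (auto intro: borel_measurable_continuous_on_restrict)
  then have "(\<lambda>p. indicator B (\<Theta> p) / w p :: real) \<in> borel_measurable (restrict_space borel {p. p \<in> C})"
    using B by (intro borel_measurable_divide measurable_compose[OF _ borel_measurable_indicator]) auto
  moreover have "{p \<in> space borel. p \<in> C} \<in> sets borel"
    using C by simp
  ultimately show ?thesis
    by (subst measurable_If_restrict_space_iff) auto
qed

lemma continuous_on_gt_scaled_on_box:
  fixes P Q :: "'a::topological_space \<times> 'b::topological_space \<Rightarrow> real"
  assumes p0: "p0 \<in> E" and P: "continuous_on E P" and Q: "continuous_on E Q"
    and Q_pos: "0 < Q p0" and QP: "Q p0 < P p0"
  obtains c U W where "1 < c" "open U" "open W" "p0 \<in> U \<times> W"
    "\<And>p. p \<in> (U \<times> W) \<inter> E \<Longrightarrow> c * Q p < P p"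
proof -
  define c where "c = (P p0 + Q p0) / (2 * Q p0)"
  have c: "1 < c" "0 < P p0 - c * Q p0"
    using Q_pos QP by (simp_all add: c_def field_simps)
  obtain A where A: "open A" "A \<inter> E = (\<lambda>p. P p - c * Q p) -` {0<..} \<inter> E"
    using P Q continuous_on_open_invariant[of E "\<lambda>p. P p - c * Q p"]
    by (metis continuous_on_diff continuous_on_mult_left open_greaterThan)
  moreover have "p0 \<in> A" using A(2) p0 c by blast
  ultimately obtain U W where UW: "open U" "open W" "p0 \<in> U \<times> W" "U \<times> W \<subseteq> A"
    by (metis open_prod_elim)
  have "c * Q p < P p" if "p \<in> (U \<times> W) \<inter> E" for p
  proof -
    have "p \<in> A \<inter> E" using that UW(4) by blast
    then show ?thesis using A(2) by auto
  qed
  with UW c show ?thesis by (intro that[of c U W]) auto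
qed

section \<open>Radon measures and Urysohn functions\<close>

lemma radon_measureD:
  assumes "radon_measure M"
  shows sets_radon: "sets M = sets borel"
    and radon_compact_finite: "compact K \<Longrightarrow> emeasure M K < \<infinity>"
    and radon_outer_regular:
      "A \<in> sets borel \<Longrightarrow> emeasure M A = (INF U \<in> {U. open U \<and> A \<subseteq> U}. emeasure M U)"
    and radon_inner_regular:
      "open U \<Longrightarrow> emeasure M U = (SUP K \<in> {K. compact K \<and> K \<subseteq> U}. emeasure M K)"
  using assms unfolding radon_measure_def by (elim conjE; simp)+

lemma space_radon: "radon_measure M \<Longrightarrow> space M = UNIV"
  using sets_eq_imp_space_eq[of M borel] sets_radon[of M] by simp

lemma open_compl_msupport: "open (- msupport M)"
proof -
  have "- msupport M = \<Union>{U. open U \<and> emeasure M U = 0}"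
    by (auto simp: msupport_def not_less)
  then show ?thesis
    using open_Union[of "{U. open U \<and> emeasure M U = 0}"] by simp
qed

lemma radon_emeasure_compl_msupport:
  assumes M: "radon_measure M"
  shows "emeasure M (- msupport M) = 0"
proof -
  let ?Z = "{U. open U \<and> emeasure M U = 0}"
  have null: "emeasure M K = 0" if K: "compact K" "K \<subseteq> - msupport M" for K
  proof -
    have "K \<subseteq> \<Union>?Z"
    proof
      fix x assume "x \<in> K"
      then have "x \<notin> msupport M" using K(2) by auto
      then obtain U where "open U" "x \<in> U" "emeasure M U = 0"
        unfolding msupport_def by (auto simp: not_less)
      then show "x \<in> \<Union>?Z" by auto
    qed
    then obtain Z where Z: "Z \<subseteq> ?Z" "finite Z" "K \<subseteq> \<Union>Z"
      using compactE[OF K(1), of ?Z] by blast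
    have sets_Z: "(\<lambda>U. U) ` Z \<subseteq> sets M" and "open (\<Union>Z)"
      using Z(1) sets_radon[OF M] by auto
    then have "emeasure M K \<le> emeasure M (\<Union>U\<in>Z. U)"
      using Z(3) sets_radon[OF M] by (intro emeasure_mono) auto
    also have "\<dots> \<le> (\<Sum>U\<in>Z. emeasure M U)"
      using Z(2) sets_Z by (rule emeasure_subadditive_finite)
    also have "\<dots> = 0" using Z(1) by (intro sum.neutral) auto
    finally show ?thesis by simp
  qed
  have "emeasure M (- msupport M) = (SUP K\<in>{K. compact K \<and> K \<subseteq> - msupport M}. emeasure M K)"
    by (rule radon_inner_regular[OF M open_compl_msupport])
  also have "\<dots> \<le> 0"
    by (rule SUP_least) (simp add: null)
  finally show ?thesis by simp
qed

lemma AE_in_msupport: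
  assumes M: "radon_measure M"
  shows "AE x in M. x \<in> msupport M"
proof (rule AE_I')
  show "- msupport M \<in> null_sets M"
    using radon_emeasure_compl_msupport[OF M] open_compl_msupport[of M]
    by (auto simp: null_sets_def sets_radon[OF M])
qed auto

lemma CcI: "continuous_on UNIV f \<Longrightarrow> compact K \<Longrightarrow> (\<And>x. x \<notin> K \<Longrightarrow> f x = 0) \<Longrightarrow> f \<in> Cc"
  unfolding Cc_def by blast

lemma Cc_continuous: "f \<in> Cc \<Longrightarrow> continuous_on UNIV f"
  unfolding Cc_def by blast

lemma integrable_Cc:
  fixes M :: "'a::t2_space measure"
  assumes M: "radon_measure M" and f: "f \<in> Cc"
  shows "integrable M f"
proof -
  obtain K where K: "compact K" "\<And>x. x \<notin> K \<Longrightarrow> f x = 0" and fc: "continuous_on UNIV f"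
    using f by (auto simp: Cc_def)
  have "bounded (f ` K)"
    using K fc by (intro compact_imp_bounded compact_continuous_image) (auto intro: continuous_on_subset)
  then obtain B where B: "\<And>x. x \<in> K \<Longrightarrow> norm (f x) \<le> B"
    by (auto simp: bounded_iff)
  have "K \<in> sets M"
    using K(1) by (simp add: sets_radon[OF M] compact_imp_closed)
  moreover have "emeasure M K < \<infinity>"
    using M K(1) by (rule radon_compact_finite)
  ultimately have "integrable M (\<lambda>x. B * indicator K x)"
    by (intro integrable_mult_right) (simp add: integrable_indicator_iff less_top)
  then show ?thesis
  proof (rule Bochner_Integration.integrable_bound)
    show "f \<in> borel_measurable M"
      by (subst measurable_cong_sets[OF sets_radon[OF M] refl]) (rule borel_measurable_continuous_onI[OF fc])
    show "AE x in M. norm (f x) \<le> norm (B * indicator K x)"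
    proof (rule AE_I2)
      fix x show "norm (f x) \<le> norm (B * indicator K x)"
        using B[of x] K(2)[of x] by (cases "x \<in> K") auto
    qed
  qed
qed

lemma nn_integral_Cc:
  fixes M :: "'a::t2_space measure"
  assumes "radon_measure M" and "f \<in> Cc" and "\<And>x. 0 \<le> f x"
  shows "(\<integral>\<^sup>+ x. ennreal (f x) \<partial>M) = ennreal (integral\<^sup>L M f)"
  using nn_integral_eq_integral[OF integrable_Cc[OF assms(1,2)]] assms(3) by auto

lemma Cc_vanishes_on_msupport:
  fixes M :: "'a::t2_space measure"
  assumes M: "radon_measure M" and f: "f \<in> Cc" and nn: "\<And>x. 0 \<le> f x"
    and zero: "integral\<^sup>L M f = 0" and a: "a \<in> msupport M"
  shows "f a = 0"
proof (rule ccontr)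
  assume "f a \<noteq> 0"
  with nn have fa: "0 < f a" by (simp add: order_less_le)
  let ?U = "{x. f a / 2 < f x}"
  have "open ?U"
    by (rule open_Collect_less[OF continuous_on_const Cc_continuous[OF f]])
  then have pos: "0 < emeasure M ?U" using a fa by (simp add: msupport_def)
  have "ennreal (f a / 2) * emeasure M ?U = (\<integral>\<^sup>+ x. ennreal (f a / 2) * indicator ?U x \<partial>M)"
    using \<open>open ?U\<close> M by (subst nn_integral_cmult_indicator) (auto simp: sets_radon)
  also have "\<dots> \<le> (\<integral>\<^sup>+ x. ennreal (f x) \<partial>M)"
    by (intro nn_integral_mono) (auto simp: indicator_def intro!: ennreal_leI)
  also have "\<dots> = 0" using nn_integral_Cc[OF M f nn] zero by simp
  finally show False using pos fa by (simp add: mult_eq_0_iff)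
qed

lemma locally_compact_neighbourhoodE:
  fixes a :: "'a::topological_space"
  assumes "locally_compact_space (euclidean :: 'a topology)"
  obtains U K where "open U" "compact K" "a \<in> U" "U \<subseteq> K"
  using assms unfolding locally_compact_space_def
  by (metis UNIV_I compactin_euclidean_iff open_openin topspace_euclidean)

lemma Hausdorff_space_euclidean_t2: "Hausdorff_space (euclidean :: 'a::t2_space topology)"
  unfolding Hausdorff_space_def disjnt_def by (metis open_openin separation_t2)

lemma Urysohn_Cc:
  fixes K Op :: "'a::t2_space set"
  assumes lc: "locally_compact_space (euclidean :: 'a topology)"
    and K: "compact K" and Op: "open Op" "K \<subseteq> Op"
  obtains f where "f \<in> Cc" "\<And>x. 0 \<le> f x" "\<And>x. f x \<le> 1"
    "\<And>x. x \<in> K \<Longrightarrow> f x = 1" "\<And>x. x \<notin> Op \<Longrightarrow> f x = 0"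
proof -
  have H: "Hausdorff_space (euclidean :: 'a topology)" by (rule Hausdorff_space_euclidean_t2)
  obtain U L where UL: "open U" "compact L" "K \<subseteq> U" "U \<subseteq> L"
    using lc K locally_compact_space_compact_closed_compact[OF disjI1[OF H]]
    by (metis compactin_euclidean_iff open_openin)
  have "completely_regular_space (euclidean :: 'a topology)"
    using lc H by (intro locally_compact_regular_imp_completely_regular_space) auto
  moreover have "closedin euclidean (- (U \<inter> Op))"
    using UL Op by (auto simp: closed_closedin[symmetric])
  ultimately obtain f :: "'a \<Rightarrow> real"
    where f: "continuous_map euclidean (top_of_set {0..1}) f" "f ` (- (U \<inter> Op)) \<subseteq> {0}" "f ` K \<subseteq> {1}"
    using Urysohn_completely_regular_compact_closed[of 0 1 euclidean K "- (U \<inter> Op)"] K Op UL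
    by (auto simp: compactin_euclidean_iff disjnt_def)
  have cont: "continuous_on UNIV f" and range: "\<And>x. f x \<in> {0..1}"
    using f(1) by (auto simp: continuous_map_in_subtopology)
  show ?thesis
  proof (rule that)
    show "f \<in> Cc" by (rule CcI[OF cont UL(2)]) (use f(2) UL in auto)
    show "\<And>x. 0 \<le> f x" "\<And>x. f x \<le> 1" using range by auto
    show "\<And>x. x \<in> K \<Longrightarrow> f x = 1" "\<And>x. x \<notin> Op \<Longrightarrow> f x = 0" using f(2,3) by auto
  qed
qed

lemma emeasure_le_radon_if_Cc_le:
  fixes M N :: "'a::t2_space measure"
  assumes lc: "locally_compact_space (euclidean :: 'a topology)"
    and M: "radon_measure M" and N: "sets N = sets borel"
    and N_inner: "\<And>U. open U \<Longrightarrow> emeasure N U \<le> (SUP K\<in>{K. compact K \<and> K \<subseteq> U}. emeasure N K)"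
    and Cc_le: "\<And>f. f \<in> Cc \<Longrightarrow> (\<And>x. 0 \<le> f x) \<Longrightarrow> (\<And>x. f x \<le> 1) \<Longrightarrow>
        (\<integral>\<^sup>+ x. ennreal (f x) \<partial>N) \<le> (\<integral>\<^sup>+ x. ennreal (f x) \<partial>M)"
    and A: "A \<in> sets borel"
  shows "emeasure N A \<le> emeasure M A"
proof -
  have "emeasure N A \<le> emeasure M U" if U: "open U" "A \<subseteq> U" for U
  proof -
    have "emeasure N A \<le> emeasure N U" using U A N by (intro emeasure_mono) auto
    also have "\<dots> \<le> (SUP K\<in>{K. compact K \<and> K \<subseteq> U}. emeasure N K)" using U N_inner by blast
    also have "\<dots> \<le> emeasure M U"
    proof (rule SUP_least)
      fix K assume K: "K \<in> {K. compact K \<and> K \<subseteq> U}"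
      then obtain f where f: "f \<in> Cc" "\<And>x. 0 \<le> f x" "\<And>x. f x \<le> 1"
        "\<And>x. x \<in> K \<Longrightarrow> f x = 1" "\<And>x. x \<notin> U \<Longrightarrow> f x = 0"
        using Urysohn_Cc[OF lc, of K U] U by blast
      have "emeasure N K = (\<integral>\<^sup>+ x. indicator K x \<partial>N)"
        using K N by (simp add: compact_imp_closed)
      also have "\<dots> \<le> (\<integral>\<^sup>+ x. ennreal (f x) \<partial>N)"
        by (intro nn_integral_mono) (auto simp: indicator_def f(2) f(4))
      also have "\<dots> \<le> (\<integral>\<^sup>+ x. ennreal (f x) \<partial>M)" using f by (intro Cc_le) auto
      also have "\<dots> \<le> (\<integral>\<^sup>+ x. indicator U x \<partial>M)"
        by (intro nn_integral_mono) (auto simp: indicator_def f(3) f(5))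
      also have "\<dots> = emeasure M U" using U M by (simp add: sets_radon)
      finally show "emeasure N K \<le> emeasure M U" .
    qed
    finally show ?thesis .
  qed
  then have "emeasure N A \<le> (INF U \<in> {U. open U \<and> A \<subseteq> U}. emeasure M U)"
    by (intro INF_greatest) auto
  also have "\<dots> = emeasure M A" using radon_outer_regular[OF M A] by simp
  finally show ?thesis .
qed

section \<open>Haar systems\<close>

locale haar_groupoid =
  fixes gm :: "'a::t2_space \<Rightarrow> 'a \<Rightarrow> 'a" and gi :: "'a \<Rightarrow> 'a" and nu :: "'a \<Rightarrow> 'a measure"
  assumes lcH: "lcH_groupoid gm gi" and haar: "haar_system gm gi nu"

sublocale haar_groupoid \<subseteq> algebraic_groupoid
  using lcH by unfold_locales (simp add: lcH_groupoid_def)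

context haar_groupoid
begin

lemma locally_compact: "locally_compact_space (euclidean :: 'a topology)"
  using lcH by (simp add: lcH_groupoid_def)

lemma continuous_inv: "continuous_on UNIV gi"
  using lcH by (simp add: lcH_groupoid_def)

lemma continuous_mult: "continuous_on (g_comp gm gi) (\<lambda>p. gm (fst p) (snd p))"
  using lcH by (simp add: lcH_groupoid_def)

lemma continuous_r: "continuous_on UNIV r"
  unfolding g_r_def[abs_def]
  by (rule continuous_on_compose2[OF continuous_mult, of _ "\<lambda>x. (x, gi x)", simplified])
     (auto intro!: continuous_intros continuous_inv)

lemma continuous_d: "continuous_on UNIV d"
  unfolding g_d_def[abs_def]
  by (rule continuous_on_compose2[OF continuous_mult, of _ "\<lambda>x. (gi x, x)", simplified])
     (auto intro!: continuous_intros continuous_inv)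

lemma continuous_on_mult_left: "continuous_on {w. r w = d z} (gm z)"
  by (rule continuous_on_compose2[OF continuous_mult, of _ "\<lambda>w. (z, w)", simplified])
     (auto intro!: continuous_intros simp: comp_iff)

lemma continuous_on_mult_right: "continuous_on {x. d x = r y} (\<lambda>x. gm x y)"
  by (rule continuous_on_compose2[OF continuous_mult, of _ "\<lambda>x. (x, y)", simplified])
     (auto intro!: continuous_intros simp: comp_iff)

lemma closed_r_fibre: "closed {w. r w = t}"
  by (rule closed_Collect_eq[OF continuous_r continuous_on_const])

lemma closed_d_fibre: "closed {w. d w = t}"
  by (rule closed_Collect_eq[OF continuous_d continuous_on_const])

lemma r_in_units [simp]: "r x \<in> g_units gm gi"
  by (simp add: g_units_def)

lemma d_in_units [simp]: "d x \<in> g_units gm gi"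
  using r_in_units[of "gi x"] by simp

lemma radon_haar: "t \<in> g_units gm gi \<Longrightarrow> radon_measure (nu t)"
  using haar unfolding haar_system_def by blast

lemma msupport_haar: "t \<in> g_units gm gi \<Longrightarrow> msupport (nu t) = {w. r w = t}"
  using haar unfolding haar_system_def by blast

lemma integral_haar_left_invariant:
  "f \<in> Cc \<Longrightarrow> (\<integral>y. f y \<partial>nu (r x)) = (\<integral>y. f (gm x y) \<partial>nu (d x))"
  using haar unfolding haar_system_def by blast

lemma continuous_on_integral_haar: "f \<in> Cc \<Longrightarrow> continuous_on (g_units gm gi) (\<lambda>t. integral\<^sup>L (nu t) f)"
  using haar unfolding haar_system_def by blast

lemma sets_haar: "t \<in> g_units gm gi \<Longrightarrow> sets (nu t) = sets borel"
  using sets_radon[OF radon_haar] .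

lemma space_haar: "t \<in> g_units gm gi \<Longrightarrow> space (nu t) = UNIV"
  using space_radon[OF radon_haar] .

lemma AE_haar_r: "t \<in> g_units gm gi \<Longrightarrow> AE w in nu t. r w = t"
  using AE_in_msupport[OF radon_haar] msupport_haar by simp

(* The value z off the fibre is arbitrary; it makes ltrans z a Borel map on all of G. *)
definition ltrans :: "'a \<Rightarrow> 'a \<Rightarrow> 'a" where
  "ltrans z w = (if r w = d z then gm z w else z)"

lemma borel_measurable_ltrans: "ltrans z \<in> borel_measurable borel"
proof -
  have "ltrans z = (\<lambda>w. if w \<in> {w. r w = d z} then gm z w else z)"
    by (simp add: ltrans_def fun_eq_iff)
  also have "\<dots> \<in> borel_measurable borel"
    by (rule borel_measurable_continuous_on_if[OF _ continuous_on_mult_left continuous_on_const])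
       (simp add: closed_r_fibre)
  finally show ?thesis .
qed

lemma measurable_ltrans_haar:
  "ltrans z \<in> measurable (nu (d z)) borel" "ltrans z \<in> measurable borel (nu (r z))"
  by (simp_all add: measurable_cong_sets[OF sets_haar refl] measurable_cong_sets[OF refl sets_haar]
      borel_measurable_ltrans)

lemma r_ltrans [simp]: "r (ltrans z w) = r z"
  by (simp add: ltrans_def r_mult comp_iff)

lemma ltrans_ltrans_inv:
  assumes "r y = r z"
  shows "ltrans z (ltrans (gi z) y) = y"
proof -
  have zy: "(gi z, y) \<in> g_comp gm gi" using assms by (simp add: comp_iff)
  then have "r (gm (gi z) y) = d z" by (simp add: r_mult)
  then show ?thesis using assms cancel_left[OF zy] by (simp add: ltrans_def)
qed

lemma ltrans_inv_ltrans: "r x = d z \<Longrightarrow> ltrans (gi z) (ltrans z x) = x"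
  using ltrans_ltrans_inv[of x "gi z"] by simp

lemma nn_integral_distr_ltrans_Cc:
  assumes f: "f \<in> Cc" "\<And>x. 0 \<le> f x"
  shows "(\<integral>\<^sup>+ x. ennreal (f x) \<partial>distr (nu (d z)) borel (ltrans z)) = (\<integral>\<^sup>+ x. ennreal (f x) \<partial>nu (r z))"
proof -
  have f_meas: "f \<in> borel_measurable borel"
    using Cc_continuous[OF f(1)] by (rule borel_measurable_continuous_onI)
  have "(\<integral>\<^sup>+ x. ennreal (f x) \<partial>distr (nu (d z)) borel (ltrans z)) = (\<integral>\<^sup>+ w. ennreal (f (ltrans z w)) \<partial>nu (d z))"
    using measurable_ltrans_haar(1) f_meas by (intro nn_integral_distr) auto
  also have "\<dots> = (\<integral>\<^sup>+ x. ennreal (f x) \<partial>nu (r z))"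
  (* Haar invariance of Bochner integrals says nothing unless w |-> f (gm z w) is integrable, which
     a nonzero integral guarantees; a zero integral forces f = 0 on the fibre instead. *)
  proof (cases "integral\<^sup>L (nu (r z)) f = 0")
    case True
    then have "f x = 0" if "r x = r z" for x
      using Cc_vanishes_on_msupport[OF radon_haar[OF r_in_units] f True] msupport_haar[OF r_in_units] that
      by auto
    moreover have "AE x in nu (r z). r x = r z" by (rule AE_haar_r) simp
    ultimately show ?thesis
      by (subst nn_integral_cong_AE[where v = "\<lambda>_. 0"]) auto
  next
    case False
    have ae: "AE w in nu (d z). f (gm z w) = f (ltrans z w)"
      using AE_haar_r[OF d_in_units[of z]] by eventually_elim (simp add: ltrans_def)
    have int_gm: "integrable (nu (d z)) (\<lambda>w. f (gm z w))"
      using False integral_haar_left_invariant[OF f(1), of z] not_integrable_integral_eq by metis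
    have meas: "(\<lambda>w. f (ltrans z w)) \<in> borel_measurable (nu (d z))"
      using measurable_ltrans_haar(1) f_meas by measurable
    have int: "integrable (nu (d z)) (\<lambda>w. f (ltrans z w))"
      using int_gm meas ae by (rule integrable_cong_AE_imp)
    have "(\<integral>\<^sup>+ w. ennreal (f (ltrans z w)) \<partial>nu (d z)) = ennreal (\<integral>w. f (ltrans z w) \<partial>nu (d z))"
      using nn_integral_eq_integral[OF int] f(2) by simp
    also have "\<dots> = ennreal (\<integral>w. f (gm z w) \<partial>nu (d z))"
      using integral_cong_AE[OF meas borel_measurable_integrable[OF int_gm]] ae
      by (simp add: eq_commute)
    also have "\<dots> = (\<integral>\<^sup>+ x. ennreal (f x) \<partial>nu (r z))"
      using integral_haar_left_invariant[OF f(1)] nn_integral_Cc[OF radon_haar f] by simp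
    finally show ?thesis .
  qed
  finally show ?thesis .
qed

lemma emeasure_haar_restrict_fibre:
  assumes "t \<in> g_units gm gi" "A \<in> sets borel"
  shows "emeasure (nu t) A = emeasure (nu t) (A \<inter> {w. r w = t})"
proof (rule emeasure_eq_AE)
  show "AE w in nu t. w \<in> A \<longleftrightarrow> w \<in> A \<inter> {w. r w = t}"
    using AE_haar_r[OF assms(1)] by eventually_elim auto
qed (use assms closed_r_fibre[of t] sets_haar[OF assms(1)] in auto)

lemma emeasure_distr_ltrans:
  "A \<in> sets borel \<Longrightarrow> emeasure (distr (nu (d z)) borel (ltrans z)) A = emeasure (nu (d z)) (ltrans z -` A)"
  using emeasure_distr[OF measurable_ltrans_haar(1)] space_haar[OF d_in_units] by simp

lemma distr_ltrans_inner_regular: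
  assumes U: "open U"
  shows "emeasure (distr (nu (d z)) borel (ltrans z)) U
     \<le> (SUP K\<in>{K. compact K \<and> K \<subseteq> U}. emeasure (distr (nu (d z)) borel (ltrans z)) K)"
    (is "emeasure ?L U \<le> ?S")
proof -
  let ?F = "{w. r w = d z}"
  obtain V where V: "open V" "V \<inter> ?F = gm z -` U \<inter> ?F"
    using continuous_on_mult_left[of z] U unfolding continuous_on_open_invariant by blast
  have "ltrans z -` U \<inter> ?F = V \<inter> ?F"
    using V(2) by (auto simp: ltrans_def)
  moreover have "ltrans z -` U \<in> sets borel"
    using U measurable_sets[OF borel_measurable_ltrans] by simp
  ultimately have "emeasure ?L U = emeasure (nu (d z)) (V \<inter> ?F)"
    using U by (simp add: emeasure_distr_ltrans emeasure_haar_restrict_fibre[OF d_in_units])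
  also have "\<dots> = emeasure (nu (d z)) V"
    using V(1) by (simp add: emeasure_haar_restrict_fibre[OF d_in_units])
  also have "\<dots> = (SUP K\<in>{K. compact K \<and> K \<subseteq> V}. emeasure (nu (d z)) K)"
    by (rule radon_inner_regular[OF radon_haar[OF d_in_units] V(1)])
  also have "\<dots> \<le> ?S"
  proof (rule SUP_least)
    fix K assume K: "K \<in> {K. compact K \<and> K \<subseteq> V}"
    let ?K' = "gm z ` (K \<inter> ?F)"
    have "compact (K \<inter> ?F)" using K closed_r_fibre by (intro compact_Int_closed) auto
    moreover have "continuous_on (K \<inter> ?F) (gm z)"
      by (rule continuous_on_subset[OF continuous_on_mult_left]) auto
    ultimately have K': "compact ?K'"
      by (intro compact_continuous_image)
    have "emeasure (nu (d z)) K = emeasure (nu (d z)) (K \<inter> ?F)"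
      using K by (simp add: emeasure_haar_restrict_fibre compact_imp_closed)
    also have "\<dots> \<le> emeasure (nu (d z)) (ltrans z -` ?K')"
      using measurable_sets[OF borel_measurable_ltrans, of ?K'] K' sets_haar[OF d_in_units]
      by (intro emeasure_mono) (auto simp: ltrans_def compact_imp_closed)
    also have "\<dots> = emeasure ?L ?K'"
      using K' by (simp add: emeasure_distr_ltrans compact_imp_closed)
    also have "\<dots> \<le> ?S"
      using K K' V(2) by (intro SUP_upper) auto
    finally show "emeasure (nu (d z)) K \<le> ?S" .
  qed
  finally show ?thesis .
qed

lemma emeasure_distr_ltrans_le:
  "A \<in> sets borel \<Longrightarrow> emeasure (distr (nu (d z)) borel (ltrans z)) A \<le> emeasure (nu (r z)) A"
  by (rule emeasure_le_radon_if_Cc_le[OF locally_compact radon_haar[OF r_in_units]])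
     (simp_all add: distr_ltrans_inner_regular nn_integral_distr_ltrans_Cc)

lemma distr_ltrans_haar: "distr (nu (d z)) borel (ltrans z) = nu (r z)"
proof (rule measure_eqI)
  fix A assume "A \<in> sets (distr (nu (d z)) borel (ltrans z))"
  then have A: "A \<in> sets borel" by simp
  then have A': "ltrans z -` A \<in> sets borel"
    using measurable_sets[OF borel_measurable_ltrans] by simp
  have "emeasure (nu (r z)) A = emeasure (nu (r z)) (A \<inter> {w. r w = r z})"
    using A by (rule emeasure_haar_restrict_fibre[OF r_in_units])
  also have "\<dots> \<le> emeasure (nu (r z)) (ltrans (gi z) -` (ltrans z -` A))"
    using measurable_sets[OF borel_measurable_ltrans A'] sets_haar[OF r_in_units]
    by (intro emeasure_mono) (auto simp: ltrans_ltrans_inv)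
  also have "\<dots> = emeasure (distr (nu (d (gi z))) borel (ltrans (gi z))) (ltrans z -` A)"
    using emeasure_distr_ltrans[OF A', of "gi z"] by simp
  also have "\<dots> \<le> emeasure (nu (d z)) (ltrans z -` A)"
    using emeasure_distr_ltrans_le[OF A', of "gi z"] by simp
  also have "\<dots> = emeasure (distr (nu (d z)) borel (ltrans z)) A"
    using A by (simp add: emeasure_distr_ltrans)
  finally show "emeasure (distr (nu (d z)) borel (ltrans z)) A = emeasure (nu (r z)) A"
    using emeasure_distr_ltrans_le[OF A] by (rule antisym[rotated])
qed (simp add: sets_haar)

lemma nn_integral_haar_ltrans: "integral\<^sup>N (nu (r z)) F = (\<integral>\<^sup>+ w. F (ltrans z w) \<partial>nu (d z))"
proof -
  have "integral\<^sup>N (distr (nu (d z)) borel (ltrans z)) F = (\<integral>\<^sup>+ w. F (ltrans z w) \<partial>nu (d z))"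
  proof (rule nn_integral_distr_invertible[where T' = "ltrans (gi z)" and D = "{w. r w = r z}"])
    show "ltrans (gi z) \<in> measurable borel (nu (d z))"
      using measurable_ltrans_haar(2)[of "gi z"] by simp
    show "AE w in nu (d z). ltrans z w \<in> {w. r w = r z} \<and> ltrans (gi z) (ltrans z w) = w"
      using AE_haar_r[OF d_in_units[of z]] by eventually_elim (simp add: ltrans_inv_ltrans)
  qed (auto simp: measurable_ltrans_haar closed_r_fibre ltrans_ltrans_inv)
  then show ?thesis by (simp add: distr_ltrans_haar)
qed

lemma measurable_inv_haar:
  assumes t: "t \<in> g_units gm gi"
  shows "gi \<in> measurable (nu t) borel" "gi \<in> measurable borel (nu t)"
  using borel_measurable_continuous_onI[OF continuous_inv]
  by (simp_all add: measurable_cong_sets[OF sets_haar[OF t] refl] measurable_cong_sets[OF refl sets_haar[OF t]])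

lemma nn_integral_haar_lower:
  assumes t: "t \<in> g_units gm gi"
  shows "integral\<^sup>N (haar_lower gi nu t) F = (\<integral>\<^sup>+ w. F (gi w) \<partial>nu t)"
  unfolding haar_lower_def
  by (rule nn_integral_distr_invertible[where T' = gi and D = UNIV]) (auto simp: measurable_inv_haar[OF t])

lemma nn_integral_haar_lower_right_invariant:
  "integral\<^sup>N (haar_lower gi nu (d y)) F = (\<integral>\<^sup>+ x. F (gm x y) \<partial>haar_lower gi nu (r y))"
proof -
  have "integral\<^sup>N (haar_lower gi nu (d y)) F = (\<integral>\<^sup>+ w. F (gi w) \<partial>nu (r (gi y)))"
    by (simp add: nn_integral_haar_lower)
  also have "\<dots> = (\<integral>\<^sup>+ w. F (gi (ltrans (gi y) w)) \<partial>nu (r y))"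
    using nn_integral_haar_ltrans[of "gi y" "\<lambda>w. F (gi w)"] by simp
  also have "\<dots> = (\<integral>\<^sup>+ w. F (gm (gi w) y) \<partial>nu (r y))"
  proof (rule nn_integral_cong_AE)
    show "AE w in nu (r y). F (gi (ltrans (gi y) w)) = F (gm (gi w) y)"
      using AE_haar_r[OF r_in_units[of y]]
      by eventually_elim (simp add: ltrans_def inv_mult comp_iff)
  qed
  also have "\<dots> = (\<integral>\<^sup>+ x. F (gm x y) \<partial>haar_lower gi nu (r y))"
    by (simp add: nn_integral_haar_lower)
  finally show ?thesis .
qed

lemma AE_haar_lower_d:
  assumes t: "t \<in> g_units gm gi"
  shows "AE x in haar_lower gi nu t. d x = t"
proof -
  have "AE x in nu t. d (gi x) = t"
    using AE_haar_r[OF t] by simp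
  then show ?thesis
    unfolding haar_lower_def using closed_d_fibre measurable_inv_haar(1)[OF t] by (subst AE_distr_iff) auto
qed

lemma emeasure_haar_lower:
  assumes t: "t \<in> g_units gm gi" and A: "A \<in> sets borel"
  shows "emeasure (haar_lower gi nu t) A = emeasure (nu t) (gi -` A)"
proof -
  have "emeasure (distr (nu t) borel gi) A = emeasure (nu t) (gi -` A \<inter> space (nu t))"
    by (rule emeasure_distr[OF measurable_inv_haar(1)[OF t] A])
  then show ?thesis
    by (simp add: haar_lower_def space_haar[OF t])
qed

lemma haar_lower_compact_finite:
  assumes t: "t \<in> g_units gm gi" and K: "compact K"
  shows "emeasure (haar_lower gi nu t) K < \<infinity>"
proof -
  have "gi -` K = gi ` K" by (auto simp: image_iff) (metis inv_inv)
  moreover have "compact (gi ` K)"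
    using K by (intro compact_continuous_image continuous_on_subset[OF continuous_inv]) auto
  ultimately show ?thesis
    using radon_compact_finite[OF radon_haar[OF t]] K
    by (simp add: emeasure_haar_lower[OF t] compact_imp_closed)
qed

lemma haar_lower_open_pos:
  assumes U: "open U" "a \<in> U"
  shows "0 < emeasure (haar_lower gi nu (d a)) U"
proof -
  have "open (gi -` U)" using U continuous_inv by (intro open_vimage) auto
  moreover have "gi a \<in> gi -` U" "gi a \<in> msupport (nu (d a))"
    using U by (simp_all add: msupport_haar)
  ultimately have "0 < emeasure (nu (d a)) (gi -` U)"
    unfolding msupport_def by blast
  then show ?thesis using U by (simp add: emeasure_haar_lower)
qed

end

section \<open>Morphisms and their modular function\<close>

locale modular_morphism = G: haar_groupoid multG invG nu + Ga: haar_groupoid multGa invGa lam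
  for multG :: "'a::t2_space \<Rightarrow> 'a \<Rightarrow> 'a" and invG nu
    and multGa :: "'g::t2_space \<Rightarrow> 'g \<Rightarrow> 'g" and invGa lam +
  fixes rho :: "'a \<Rightarrow> 'g" and act :: "'g \<Rightarrow> 'a \<Rightarrow> 'a" and Delta :: "'a \<Rightarrow> 'g \<Rightarrow> real"
  assumes morphism: "haar_morphism multGa invGa lam multG invG nu rho act Delta"
begin

definition sig :: "'a \<Rightarrow> 'g" where
  "sig x = rho (G.r x)"

definition SD :: "('a \<times> 'g) set" where
  "SD = semidirect_h multGa invGa multG invG rho"

definition sd_inv :: "'a \<times> 'g \<Rightarrow> 'a \<times> 'g" where
  "sd_inv p = (act (invGa (snd p)) (fst p), invGa (snd p))"

lemma SD_iff: "(x, \<gamma>) \<in> SD \<longleftrightarrow> sig x = Ga.r \<gamma>"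
  by (simp add: SD_def semidirect_h_def sig_def)

lemma continuous_morphism: "continuous_morphism multGa invGa multG invG rho act"
  using morphism by (simp add: haar_morphism_def)

lemma rho_units: "t \<in> g_units multG invG \<Longrightarrow> rho t \<in> g_units multGa invGa"
  using continuous_morphism unfolding continuous_morphism_def by blast

lemma continuous_on_rho: "continuous_on (g_units multG invG) rho"
  using continuous_morphism unfolding continuous_morphism_def by blast

lemma continuous_on_act: "continuous_on {(\<gamma>, x). Ga.d \<gamma> = sig x} (\<lambda>p. act (fst p) (snd p))"
  using continuous_morphism unfolding continuous_morphism_def star_h_def sig_def by blast

lemma sig_act: "Ga.d \<gamma> = sig x \<Longrightarrow> sig (act \<gamma> x) = Ga.r \<gamma>"
  using continuous_morphism unfolding continuous_morphism_def star_h_def sig_def by blast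

lemma act_sig: "act (sig x) x = x"
  using continuous_morphism unfolding continuous_morphism_def sig_def by blast

lemma act_mult:
  "(\<gamma>1, \<gamma>2) \<in> g_comp multGa invGa \<Longrightarrow> Ga.d \<gamma>2 = sig x \<Longrightarrow> act (multGa \<gamma>1 \<gamma>2) x = act \<gamma>1 (act \<gamma>2 x)"
  using continuous_morphism unfolding continuous_morphism_def star_h_def sig_def by blast

lemma d_act: "Ga.d \<gamma> = sig x \<Longrightarrow> G.d (act \<gamma> x) = G.d x"
  using continuous_morphism unfolding continuous_morphism_def star_h_def sig_def by blast

lemma act_mult_right:
  "Ga.d \<gamma> = sig x \<Longrightarrow> (x, y) \<in> g_comp multG invG \<Longrightarrow> multG (act \<gamma> x) y = act \<gamma> (multG x y)"
  using continuous_morphism unfolding continuous_morphism_def star_h_def sig_def by blast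

lemma continuous_on_Delta: "continuous_on SD (case_prod Delta)"
  using morphism unfolding haar_morphism_def morphism_modular_def SD_def
  by (simp add: case_prod_beta')

lemma Delta_pos: "p \<in> SD \<Longrightarrow> 0 < case_prod Delta p"
  using morphism unfolding haar_morphism_def morphism_modular_def SD_def by auto

lemma modular_identity:
  assumes "t \<in> g_units multG invG" and "g \<in> borel_measurable (restrict_space borel SD)" and "\<And>p. 0 \<le> g p"
  shows "(\<integral>\<^sup>+ x. (\<integral>\<^sup>+ \<gamma>. ennreal (g (sd_inv (x, \<gamma>)) * case_prod Delta (sd_inv (x, \<gamma>)))
              \<partial>lam (sig x)) \<partial>haar_lower invG nu t)
       = (\<integral>\<^sup>+ x. (\<integral>\<^sup>+ \<gamma>. ennreal (g (x, \<gamma>)) \<partial>lam (sig x)) \<partial>haar_lower invG nu t)"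
  using morphism assms unfolding haar_morphism_def morphism_modular_def SD_def sig_def sd_inv_def
  by simp

lemma sig_in_units: "sig x \<in> g_units multGa invGa"
  unfolding sig_def by (rule rho_units[OF G.r_in_units])

lemma sig_mult: "(x, y) \<in> g_comp multG invG \<Longrightarrow> sig (multG x y) = sig x"
  by (simp add: sig_def G.r_mult)

lemma continuous_sig: "continuous_on UNIV sig"
  unfolding sig_def[abs_def]
  by (rule continuous_on_compose2[OF continuous_on_rho G.continuous_r]) auto

lemma closed_SD: "closed SD"
proof -
  have "SD = {p. sig (fst p) = Ga.r (snd p)}" by (auto simp: SD_iff)
  moreover have "closed {p. sig (fst p) = Ga.r (snd p)}"
    by (rule closed_Collect_eq)
       (auto intro!: continuous_on_compose2[OF continuous_sig] continuous_on_compose2[OF Ga.continuous_r]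
         continuous_intros)
  ultimately show ?thesis by simp
qed

lemma sd_inv_in_SD: "p \<in> SD \<Longrightarrow> sd_inv p \<in> SD"
  by (cases p) (simp add: SD_iff sd_inv_def sig_act)

lemma sd_inv_sd_inv: "p \<in> SD \<Longrightarrow> sd_inv (sd_inv p) = p"
proof (cases p)
  case (Pair x \<gamma>)
  assume "p \<in> SD"
  then have "sig x = Ga.r \<gamma>" using Pair by (simp add: SD_iff)
  then have "act \<gamma> (act (invGa \<gamma>) x) = x"
    using act_mult[OF Ga.comp_inv_right, of \<gamma> x] act_sig[of x] by (simp add: g_r_def)
  then show ?thesis using Pair by (simp add: sd_inv_def)
qed

lemma d_fst_sd_inv: "p \<in> SD \<Longrightarrow> G.d (fst (sd_inv p)) = G.d (fst p)"
  by (cases p) (simp add: SD_iff sd_inv_def d_act)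

lemma continuous_on_sd_inv: "continuous_on SD sd_inv"
proof -
  have "continuous_on SD (\<lambda>p. (\<lambda>q. act (fst q) (snd q)) (invGa (snd p), fst p))"
    by (rule continuous_on_compose2[OF continuous_on_act])
       (auto simp: SD_iff intro!: continuous_intros continuous_on_compose2[OF Ga.continuous_inv])
  moreover have "continuous_on SD (\<lambda>p. invGa (snd p))"
    by (auto intro!: continuous_intros continuous_on_compose2[OF Ga.continuous_inv])
  ultimately show ?thesis unfolding sd_inv_def by (auto intro: continuous_on_Pair)
qed

lemma AE_in_SD: "AE \<gamma> in lam (sig x). (x, \<gamma>) \<in> SD"
  using Ga.AE_haar_r[OF sig_in_units[of x]] by eventually_elim (simp add: SD_iff)

lemma sets_lam_sig [simp]: "sets (lam (sig x)) = sets borel"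
  by (rule Ga.sets_haar[OF sig_in_units])

definition SD_over :: "'a \<Rightarrow> ('a \<times> 'g) set" where
  "SD_over t = SD \<inter> {p. G.d (fst p) = t}"

definition double_integral :: "'a \<Rightarrow> ('a \<times> 'g \<Rightarrow> real) \<Rightarrow> ennreal" where
  "double_integral t h = (\<integral>\<^sup>+ x. (\<integral>\<^sup>+ \<gamma>. ennreal (h (x, \<gamma>)) \<partial>lam (sig x)) \<partial>haar_lower invG nu t)"

definition box_mass :: "'a \<Rightarrow> 'a set \<Rightarrow> 'g set \<Rightarrow> ennreal" where
  "box_mass t U W = (\<integral>\<^sup>+ x. indicator U x * emeasure (lam (sig x)) W \<partial>haar_lower invG nu t)"

definition box_integral :: "'a \<Rightarrow> ('a \<times> 'g \<Rightarrow> real) \<Rightarrow> 'a set \<Rightarrow> 'g set \<Rightarrow> ennreal" where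
  "box_integral t F U W = double_integral t (\<lambda>p. indicator (U \<times> W) (sd_inv p) / F (sd_inv p))"

lemma closed_SD_over: "closed (SD_over t)"
proof -
  have "closed {p :: 'a \<times> 'g. G.d (fst p) = t}"
    by (rule closed_Collect_eq) (auto intro!: continuous_on_compose2[OF G.continuous_d] continuous_intros)
  then show ?thesis unfolding SD_over_def using closed_SD by (intro closed_Int)
qed

lemma sd_inv_in_SD_over: "p \<in> SD_over t \<Longrightarrow> sd_inv p \<in> SD_over t"
  using sd_inv_in_SD d_fst_sd_inv by (auto simp: SD_over_def)

lemma double_integral_mono_scaled:
  assumes t: "t \<in> g_units multG invG" and a: "0 < a"
    and le: "\<And>p. p \<in> SD_over t \<Longrightarrow> h p \<le> a * h' p" and nonneg: "\<And>p. p \<in> SD_over t \<Longrightarrow> 0 \<le> h' p"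
  shows "double_integral t h \<le> ennreal a * double_integral t h'"
proof -
  have "(\<integral>\<^sup>+ \<gamma>. ennreal (h (x, \<gamma>)) \<partial>lam (sig x)) \<le> ennreal a * (\<integral>\<^sup>+ \<gamma>. ennreal (h' (x, \<gamma>)) \<partial>lam (sig x))"
    if x: "G.d x = t" for x
  proof -
    have "(\<integral>\<^sup>+ \<gamma>. ennreal (h (x, \<gamma>)) \<partial>lam (sig x)) \<le> (\<integral>\<^sup>+ \<gamma>. ennreal a * ennreal (h' (x, \<gamma>)) \<partial>lam (sig x))"
      using AE_in_SD[of x]
      by (rule nn_integral_mono_AE[OF eventually_mono])
         (use x le nonneg a in \<open>auto simp: SD_over_def ennreal_mult[symmetric] intro!: ennreal_leI\<close>)
    also have "\<dots> \<le> ennreal a * (\<integral>\<^sup>+ \<gamma>. ennreal (h' (x, \<gamma>)) \<partial>lam (sig x))"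
      by (rule nn_integral_cmult_le[OF a])
    finally show ?thesis .
  qed
  then have "double_integral t h
      \<le> (\<integral>\<^sup>+ x. ennreal a * (\<integral>\<^sup>+ \<gamma>. ennreal (h' (x, \<gamma>)) \<partial>lam (sig x)) \<partial>haar_lower invG nu t)"
    unfolding double_integral_def
    by (intro nn_integral_mono_AE[OF eventually_mono[OF G.AE_haar_lower_d[OF t]]]) auto
  also have "\<dots> \<le> ennreal a * double_integral t h'"
    unfolding double_integral_def by (rule nn_integral_cmult_le[OF a])
  finally show ?thesis .
qed

lemma double_integral_cong:
  assumes t: "t \<in> g_units multG invG" and eq: "\<And>p. p \<in> SD_over t \<Longrightarrow> h p = h' p"
  shows "double_integral t h = double_integral t h'"
  unfolding double_integral_def
proof (rule nn_integral_cong_AE)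
  show "AE x in haar_lower invG nu t.
      (\<integral>\<^sup>+ \<gamma>. ennreal (h (x, \<gamma>)) \<partial>lam (sig x)) = (\<integral>\<^sup>+ \<gamma>. ennreal (h' (x, \<gamma>)) \<partial>lam (sig x))"
    using G.AE_haar_lower_d[OF t]
  proof eventually_elim
    case (elim x)
    show ?case
      using AE_in_SD[of x] by (intro nn_integral_cong_AE) (auto elim!: eventually_mono simp: SD_over_def eq elim)
  qed
qed

lemma double_integral_right_translate:
  "double_integral (G.d y) g = double_integral (G.r y) (\<lambda>p. g (multG (fst p) y, snd p))"
proof -
  have "double_integral (G.d y) g
      = (\<integral>\<^sup>+ x. (\<integral>\<^sup>+ \<gamma>. ennreal (g (multG x y, \<gamma>)) \<partial>lam (sig (multG x y))) \<partial>haar_lower invG nu (G.r y))"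
    unfolding double_integral_def by (rule G.nn_integral_haar_lower_right_invariant)
  also have "\<dots> = double_integral (G.r y) (\<lambda>p. g (multG (fst p) y, snd p))"
    unfolding double_integral_def
    using G.AE_haar_lower_d[OF G.r_in_units[of y]]
    by (intro nn_integral_cong_AE) (auto elim!: eventually_mono simp: sig_mult G.comp_iff)
  finally show ?thesis .
qed

lemma box_mass_right_translate:
  "box_mass (G.r y) U W
     = (\<integral>\<^sup>+ x. indicator U (multG x (invG y)) * emeasure (lam (sig x)) W \<partial>haar_lower invG nu (G.d y))"
proof -
  have "box_mass (G.r y) U W
      = (\<integral>\<^sup>+ x. indicator U (multG (multG x y) (invG y)) * emeasure (lam (sig (multG x y))) W
          \<partial>haar_lower invG nu (G.r y))"
    unfolding box_mass_def using G.AE_haar_lower_d[OF G.r_in_units[of y]]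
    by (intro nn_integral_cong_AE) (auto elim!: eventually_mono simp: G.cancel_right sig_mult G.comp_iff)
  also have "\<dots> = (\<integral>\<^sup>+ x. indicator U (multG x (invG y)) * emeasure (lam (sig x)) W \<partial>haar_lower invG nu (G.d y))"
    by (rule G.nn_integral_haar_lower_right_invariant[symmetric])
  finally show ?thesis .
qed

lemma nn_integral_eq_double_integral:
  assumes t: "t \<in> g_units multG invG" and W: "open W"
    and g: "g \<in> borel_measurable (restrict_space borel SD)" "\<And>p. 0 \<le> g p" and f: "\<And>x. 0 \<le> f x"
    and box: "\<And>x \<gamma>. G.d x = t \<Longrightarrow> (x, \<gamma>) \<in> SD \<Longrightarrow>
      g (sd_inv (x, \<gamma>)) * case_prod Delta (sd_inv (x, \<gamma>)) = f x * indicator W \<gamma>"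
  shows "(\<integral>\<^sup>+ x. ennreal (f x) * emeasure (lam (sig x)) W \<partial>haar_lower invG nu t) = double_integral t g"
proof -
  have "(\<integral>\<^sup>+ \<gamma>. ennreal (g (sd_inv (x, \<gamma>)) * case_prod Delta (sd_inv (x, \<gamma>))) \<partial>lam (sig x))
      = ennreal (f x) * emeasure (lam (sig x)) W" if x: "G.d x = t" for x
  proof -
    have "(\<integral>\<^sup>+ \<gamma>. ennreal (g (sd_inv (x, \<gamma>)) * case_prod Delta (sd_inv (x, \<gamma>))) \<partial>lam (sig x))
        = (\<integral>\<^sup>+ \<gamma>. ennreal (f x) * indicator W \<gamma> \<partial>lam (sig x))"
      using AE_in_SD[of x] by (intro nn_integral_cong_AE) (auto elim!: eventually_mono simp: box x indicator_def)
    also have "\<dots> = ennreal (f x) * emeasure (lam (sig x)) W"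
      using W by (simp add: nn_integral_cmult_indicator)
    finally show ?thesis .
  qed
  then have "(\<integral>\<^sup>+ x. ennreal (f x) * emeasure (lam (sig x)) W \<partial>haar_lower invG nu t)
      = (\<integral>\<^sup>+ x. (\<integral>\<^sup>+ \<gamma>. ennreal (g (sd_inv (x, \<gamma>)) * case_prod Delta (sd_inv (x, \<gamma>))) \<partial>lam (sig x))
          \<partial>haar_lower invG nu t)"
    using G.AE_haar_lower_d[OF t] by (intro nn_integral_cong_AE) (auto elim!: eventually_mono)
  also have "\<dots> = double_integral t g"
    unfolding double_integral_def by (rule modular_identity[OF t g])
  finally show ?thesis .
qed

definition translated_test :: "'a \<Rightarrow> 'a set \<Rightarrow> 'g set \<Rightarrow> 'a \<times> 'g \<Rightarrow> real" where
  "translated_test y U W p =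
    (if p \<in> SD_over (G.d y) then indicator (U \<times> W) (sd_inv (multG (fst p) (invG y), snd p)) / case_prod Delta p
     else 0)"

lemma translated_test_nonneg: "0 \<le> translated_test y U W p"
  using Delta_pos[of p] by (auto simp: translated_test_def SD_over_def intro!: divide_nonneg_pos)

lemma borel_measurable_translated_test:
  assumes "open U" "open W"
  shows "translated_test y U W \<in> borel_measurable borel"
proof -
  let ?R = "\<lambda>p. (multG (fst p) (invG y), snd p)"
  have R_SD: "?R p \<in> SD" if "p \<in> SD_over (G.d y)" for p
    using that sig_mult[of "fst p" "invG y"] by (cases p) (auto simp: SD_over_def SD_iff G.comp_iff)
  have "continuous_on (SD_over (G.d y)) ?R"
    by (intro continuous_on_Pair continuous_on_compose2[OF G.continuous_on_mult_right[of "invG y"]]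
        continuous_intros) (auto simp: SD_over_def)
  then have "continuous_on (SD_over (G.d y)) (\<lambda>p. sd_inv (?R p))"
    using R_SD by (intro continuous_on_compose2[OF continuous_on_sd_inv]) auto
  then show ?thesis
    unfolding translated_test_def[abs_def] using assms
    by (intro borel_measurable_indicator_divide_on_closed closed_SD_over open_Times
        continuous_on_subset[OF continuous_on_Delta]) (auto simp: SD_over_def)
qed

lemma translated_test_sd_inv:
  assumes x: "G.d x = G.d y" and x\<gamma>: "(x, \<gamma>) \<in> SD"
  shows "translated_test y U W (sd_inv (x, \<gamma>)) * case_prod Delta (sd_inv (x, \<gamma>))
    = indicator U (multG x (invG y)) * indicator W \<gamma>"
proof -
  have xy: "(x, invG y) \<in> g_comp multG invG" using x by (simp add: G.comp_iff)
  have "sd_inv (x, \<gamma>) \<in> SD_over (G.d y)"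
    using sd_inv_in_SD[OF x\<gamma>] d_fst_sd_inv[OF x\<gamma>] x by (simp add: SD_over_def)
  moreover have "(multG (fst (sd_inv (x, \<gamma>))) (invG y), snd (sd_inv (x, \<gamma>))) = sd_inv (multG x (invG y), \<gamma>)"
    using x\<gamma> act_mult_right[OF _ xy, of "invGa \<gamma>"] by (simp add: sd_inv_def SD_iff)
  moreover have "(multG x (invG y), \<gamma>) \<in> SD"
    using x\<gamma> sig_mult[OF xy] by (simp add: SD_iff)
  ultimately show ?thesis
    using sd_inv_sd_inv Delta_pos[OF sd_inv_in_SD[OF x\<gamma>]] by (simp add: translated_test_def indicator_def)
qed

definition Delta_right :: "'a \<Rightarrow> 'a \<times> 'g \<Rightarrow> real" where
  "Delta_right y q = Delta (multG (fst (sd_inv q)) y) (snd (sd_inv q))"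

lemma right_mult_sd_inv_in_SD:
  assumes q: "q \<in> SD_over (G.r y)"
  shows "(multG (fst (sd_inv q)) y, snd (sd_inv q)) \<in> SD"
proof -
  have "(fst (sd_inv q), y) \<in> g_comp multG invG"
    using q d_fst_sd_inv[of q] by (auto simp: SD_over_def G.comp_iff)
  then show ?thesis
    using sd_inv_in_SD[of q] q sig_mult by (cases "sd_inv q") (auto simp: SD_over_def SD_iff)
qed

lemma Delta_right_pos: "q \<in> SD_over (G.r y) \<Longrightarrow> 0 < Delta_right y q"
  using Delta_pos[OF right_mult_sd_inv_in_SD] by (simp add: Delta_right_def)

lemma continuous_on_Delta_right: "continuous_on (SD_over (G.r y)) (Delta_right y)"
proof -
  have "continuous_on (SD_over (G.r y)) sd_inv"
    by (rule continuous_on_subset[OF continuous_on_sd_inv]) (auto simp: SD_over_def)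
  then have "continuous_on (SD_over (G.r y)) (\<lambda>q. (multG (fst (sd_inv q)) y, snd (sd_inv q)))"
    using d_fst_sd_inv
    by (intro continuous_on_Pair continuous_on_compose2[OF G.continuous_on_mult_right[of y]]
        continuous_on_fst continuous_on_snd) (auto simp: SD_over_def)
  moreover have "(\<lambda>q. (multG (fst (sd_inv q)) y, snd (sd_inv q))) ` SD_over (G.r y) \<subseteq> SD"
    using right_mult_sd_inv_in_SD by auto
  ultimately have "continuous_on (SD_over (G.r y))
      (\<lambda>q. case_prod Delta (multG (fst (sd_inv q)) y, snd (sd_inv q)))"
    by (rule continuous_on_compose2[OF continuous_on_Delta])
  then show ?thesis
    by (simp add: Delta_right_def[abs_def])
qed

lemma box_mass_eq_box_integral:
  assumes U: "open U" and W: "open W"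
  shows "box_mass (G.r y) U W = box_integral (G.r y) (Delta_right y) U W"
proof -
  have "box_mass (G.r y) U W
      = (\<integral>\<^sup>+ x. ennreal (indicator U (multG x (invG y))) * emeasure (lam (sig x)) W \<partial>haar_lower invG nu (G.d y))"
    by (simp add: box_mass_right_translate ennreal_indicator)
  also have "\<dots> = double_integral (G.d y) (translated_test y U W)"
    using measurable_restrict_space1[OF borel_measurable_translated_test[OF U W]]
    by (intro nn_integral_eq_double_integral W translated_test_nonneg translated_test_sd_inv) auto
  also have "\<dots> = double_integral (G.r y) (\<lambda>p. translated_test y U W (multG (fst p) y, snd p))"
    by (rule double_integral_right_translate)
  also have "\<dots> = box_integral (G.r y) (Delta_right y) U W"
    unfolding box_integral_def
  proof (intro double_integral_cong)
    fix p assume p: "p \<in> SD_over (G.r y)"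
    obtain x \<gamma> where p_eq: "p = (x, \<gamma>)" by (cases p)
    have xy: "(x, y) \<in> g_comp multG invG" using p p_eq by (simp add: SD_over_def G.comp_iff)
    have "(multG x y, \<gamma>) \<in> SD_over (G.d y)"
      using p p_eq sig_mult[OF xy] G.d_mult[OF xy] by (simp add: SD_over_def SD_iff)
    then show "translated_test y U W (multG (fst p) y, snd p)
        = indicator (U \<times> W) (sd_inv p) / Delta_right y (sd_inv p)"
      using p p_eq G.cancel_right[OF xy] sd_inv_sd_inv[of p]
      by (simp add: translated_test_def Delta_right_def SD_over_def)
  qed simp
  finally show ?thesis .
qed

lemma continuous_integral_lam_sig: "f \<in> Cc \<Longrightarrow> continuous_on UNIV (\<lambda>x. integral\<^sup>L (lam (sig x)) f)"
  by (rule continuous_on_compose2[OF Ga.continuous_on_integral_haar continuous_sig]) (auto simp: sig_in_units)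

lemma emeasure_lam_sig_bounded_near:
  obtains V W C where "open V" "a \<in> V" "open W" "\<beta> \<in> W" "\<And>x. x \<in> V \<Longrightarrow> emeasure (lam (sig x)) W \<le> ennreal C"
proof -
  obtain W K where W: "open W" "compact K" "\<beta> \<in> W" "W \<subseteq> K"
    using locally_compact_neighbourhoodE[OF Ga.locally_compact] .
  obtain f where f: "f \<in> Cc" "\<And>\<gamma>. 0 \<le> f \<gamma>" "\<And>\<gamma>. \<gamma> \<in> K \<Longrightarrow> f \<gamma> = 1"
    using Urysohn_Cc[OF Ga.locally_compact W(2) open_UNIV subset_UNIV] by metis
  define \<phi> where "\<phi> x = integral\<^sup>L (lam (sig x)) f" for x
  define V where "V = {x. \<phi> x < \<phi> a + 1}"
  have "open V"
    unfolding V_def \<phi>_def by (rule open_Collect_less[OF continuous_integral_lam_sig[OF f(1)] continuous_on_const])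
  moreover have "emeasure (lam (sig x)) W \<le> ennreal (\<phi> a + 1)" if "x \<in> V" for x
  proof -
    have "emeasure (lam (sig x)) W = (\<integral>\<^sup>+ \<gamma>. indicator W \<gamma> \<partial>lam (sig x))"
      using W(1) by simp
    also have "\<dots> \<le> (\<integral>\<^sup>+ \<gamma>. ennreal (f \<gamma>) \<partial>lam (sig x))"
      using W(4) f(2,3) by (intro nn_integral_mono) (auto simp: indicator_def)
    also have "\<dots> = ennreal (\<phi> x)"
      unfolding \<phi>_def by (rule nn_integral_Cc[OF Ga.radon_haar[OF sig_in_units] f(1,2)])
    also have "\<dots> \<le> ennreal (\<phi> a + 1)"
      using that by (intro ennreal_leI) (simp add: V_def)
    finally show ?thesis .
  qed
  ultimately show ?thesis
    using W by (intro that[of V W "\<phi> a + 1"]) (auto simp: V_def)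
qed

lemma emeasure_lam_sig_pos_near:
  assumes a\<beta>: "(a, \<beta>) \<in> SD" and W: "open W" "\<beta> \<in> W"
  obtains V \<epsilon> where "open V" "a \<in> V" "0 < \<epsilon>" "\<And>x. x \<in> V \<Longrightarrow> ennreal \<epsilon> \<le> emeasure (lam (sig x)) W"
proof -
  obtain f where f: "f \<in> Cc" "\<And>\<gamma>. 0 \<le> f \<gamma>" "\<And>\<gamma>. f \<gamma> \<le> 1" "f \<beta> = 1" "\<And>\<gamma>. \<gamma> \<notin> W \<Longrightarrow> f \<gamma> = 0"
    using Urysohn_Cc[OF Ga.locally_compact, of "{\<beta>}" W] W by auto
  define \<phi> where "\<phi> x = integral\<^sup>L (lam (sig x)) f" for x
  have "\<beta> \<in> msupport (lam (sig a))"
    using Ga.msupport_haar[OF sig_in_units[of a]] a\<beta> by (simp add: SD_iff)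
  then have "\<phi> a \<noteq> 0"
    using Cc_vanishes_on_msupport[OF Ga.radon_haar[OF sig_in_units] f(1,2)] f(4) by (auto simp: \<phi>_def)
  then have \<phi>_pos: "0 < \<phi> a"
    using f(2) by (simp add: \<phi>_def order_less_le)
  define V where "V = {x. \<phi> a / 2 < \<phi> x}"
  have "open V"
    unfolding V_def \<phi>_def by (rule open_Collect_less[OF continuous_on_const continuous_integral_lam_sig[OF f(1)]])
  moreover have "ennreal (\<phi> a / 2) \<le> emeasure (lam (sig x)) W" if "x \<in> V" for x
  proof -
    have "ennreal (\<phi> a / 2) \<le> ennreal (\<phi> x)"
      using that by (intro ennreal_leI) (simp add: V_def)
    also have "\<dots> = (\<integral>\<^sup>+ \<gamma>. ennreal (f \<gamma>) \<partial>lam (sig x))"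
      unfolding \<phi>_def by (rule nn_integral_Cc[OF Ga.radon_haar[OF sig_in_units] f(1,2), symmetric])
    also have "\<dots> \<le> (\<integral>\<^sup>+ \<gamma>. indicator W \<gamma> \<partial>lam (sig x))"
      using f(3,5) by (intro nn_integral_mono) (auto simp: indicator_def)
    also have "\<dots> = emeasure (lam (sig x)) W"
      using W(1) by simp
    finally show ?thesis .
  qed
  ultimately show ?thesis
    using \<phi>_pos by (intro that[of V "\<phi> a / 2"]) (auto simp: V_def)
qed

lemma box_mass_pos_finite:
  assumes a\<beta>: "(a, \<beta>) \<in> SD" and U: "open U" "a \<in> U" and W: "open W" "\<beta> \<in> W"
  obtains U' W' where "open U'" "open W'" "a \<in> U'" "\<beta> \<in> W'" "U' \<subseteq> U" "W' \<subseteq> W"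
    "0 < box_mass (G.d a) U' W'" "box_mass (G.d a) U' W' < \<infinity>"
proof -
  obtain U1 K where U1: "open U1" "compact K" "a \<in> U1" "U1 \<subseteq> K"
    using locally_compact_neighbourhoodE[OF G.locally_compact] .
  obtain V1 W1 C where V1: "open V1" "a \<in> V1" "open W1" "\<beta> \<in> W1"
    and bounded: "\<And>x. x \<in> V1 \<Longrightarrow> emeasure (lam (sig x)) W1 \<le> ennreal C"
    by (rule emeasure_lam_sig_bounded_near[where a = a and \<beta> = \<beta>]) blast
  obtain V2 \<epsilon> where V2: "open V2" "a \<in> V2" "0 < \<epsilon>"
    and pos: "\<And>x. x \<in> V2 \<Longrightarrow> ennreal \<epsilon> \<le> emeasure (lam (sig x)) (W \<inter> W1)"
    using emeasure_lam_sig_pos_near[OF a\<beta>, of "W \<inter> W1"] W V1 by auto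
  define U' where "U' = U \<inter> U1 \<inter> V1 \<inter> V2"
  have U': "open U'" "a \<in> U'" using U U1 V1 V2 by (auto simp: U'_def)
  have "box_mass (G.d a) U' (W \<inter> W1) \<le> (\<integral>\<^sup>+ x. ennreal C * indicator K x \<partial>haar_lower invG nu (G.d a))"
    unfolding box_mass_def
  proof (rule nn_integral_mono)
    fix x
    have "emeasure (lam (sig x)) (W \<inter> W1) \<le> emeasure (lam (sig x)) W1"
      using W V1 by (intro emeasure_mono) auto
    then show "indicator U' x * emeasure (lam (sig x)) (W \<inter> W1) \<le> ennreal C * indicator K x"
      using bounded[of x] U1(4) by (auto simp: U'_def indicator_def)
  qed
  also have "\<dots> < \<infinity>"
    using U1(2) G.haar_lower_compact_finite[OF G.d_in_units U1(2)]
    by (simp add: nn_integral_cmult_indicator compact_imp_closed ennreal_mult_less_top haar_lower_def)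
  finally have finite: "box_mass (G.d a) U' (W \<inter> W1) < \<infinity>" .
  have "0 < ennreal \<epsilon> * emeasure (haar_lower invG nu (G.d a)) U'"
    using V2(3) G.haar_lower_open_pos[OF U'] by (simp add: ennreal_zero_less_mult_iff)
  also have "\<dots> = (\<integral>\<^sup>+ x. ennreal \<epsilon> * indicator U' x \<partial>haar_lower invG nu (G.d a))"
    using U'(1) by (simp add: nn_integral_cmult_indicator haar_lower_def)
  also have "\<dots> \<le> box_mass (G.d a) U' (W \<inter> W1)"
    unfolding box_mass_def using pos by (intro nn_integral_mono) (auto simp: U'_def indicator_def)
  finally show ?thesis
    using U' W V1 finite by (intro that[of U' "W \<inter> W1"]) (auto simp: U'_def)
qed

lemma box_weight_le:
  assumes p0: "p0 \<in> SD_over t"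
    and P: "continuous_on (SD_over t) P" "\<And>p. p \<in> SD_over t \<Longrightarrow> 0 < P p"
    and Q: "continuous_on (SD_over t) Q" "\<And>p. p \<in> SD_over t \<Longrightarrow> 0 < Q p"
    and P_box: "\<And>U W. open U \<Longrightarrow> open W \<Longrightarrow> box_integral t P U W = box_mass t U W"
    and Q_box: "\<And>U W. open U \<Longrightarrow> open W \<Longrightarrow> box_integral t Q U W = box_mass t U W"
  shows "P p0 \<le> Q p0"
proof (rule ccontr)
  assume "\<not> P p0 \<le> Q p0"
  then obtain c U W where c: "1 < c" and UW: "open U" "open W" "p0 \<in> U \<times> W"
    and gap: "\<And>p. p \<in> (U \<times> W) \<inter> SD_over t \<Longrightarrow> c * Q p < P p"
    using continuous_on_gt_scaled_on_box[OF p0 P(1) Q(1) Q(2)[OF p0]] by (metis not_le)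
  obtain a \<beta> where p0_eq: "p0 = (a, \<beta>)" by (cases p0)
  have a\<beta>: "(a, \<beta>) \<in> SD" and t: "t = G.d a"
    using p0 p0_eq by (auto simp: SD_over_def)
  have "a \<in> U" "\<beta> \<in> W" using UW(3) p0_eq by auto
  then obtain U' W' where UW': "open U'" "open W'" "a \<in> U'" "\<beta> \<in> W'" "U' \<subseteq> U" "W' \<subseteq> W"
    and X: "0 < box_mass (G.d a) U' W'" "box_mass (G.d a) U' W' < \<infinity>"
    by (rule box_mass_pos_finite[OF a\<beta> UW(1) _ UW(2)])
  have Q_nonneg: "0 \<le> indicator (U' \<times> W') (sd_inv p) / Q (sd_inv p)" if "p \<in> SD_over t" for p
    using Q(2)[OF sd_inv_in_SD_over[OF that]] by simp
  have "indicator (U' \<times> W') (sd_inv p) / P (sd_inv p) \<le> 1 / c * (indicator (U' \<times> W') (sd_inv p) / Q (sd_inv p))"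
    if p: "p \<in> SD_over t" for p
  proof (cases "sd_inv p \<in> U' \<times> W'")
    case True
    have q: "sd_inv p \<in> SD_over t" by (rule sd_inv_in_SD_over[OF p])
    then have "c * Q (sd_inv p) < P (sd_inv p)" using True UW' by (intro gap) auto
    moreover have "0 < c * Q (sd_inv p)" using Q(2)[OF q] c by simp
    ultimately have "1 / P (sd_inv p) \<le> 1 / (c * Q (sd_inv p))"
      by (intro divide_left_mono) auto
    then show ?thesis using True by simp
  qed simp
  then have "box_integral t P U' W' \<le> ennreal (1 / c) * box_integral t Q U' W'"
    unfolding box_integral_def using c p0 t Q_nonneg
    by (intro double_integral_mono_scaled) (auto simp: SD_over_def)
  then have "box_mass t U' W' \<le> ennreal (1 / c) * box_mass t U' W'"
    using P_box Q_box UW'(1,2) by simp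
  then have "box_mass t U' W' = 0 \<or> box_mass t U' W' = \<infinity>"
    by (rule ennreal_le_scaled_imp_zero_or_top[OF _ c])
  then show False
    using X unfolding t by auto
qed

lemma Delta_eq_Delta_r:
  assumes x\<gamma>: "(x, \<gamma>) \<in> SD"
  shows "Delta x \<gamma> = Delta (G.r x) \<gamma>"
proof -
  let ?t = "G.r x"
  have t\<gamma>: "(?t, \<gamma>) \<in> SD" using x\<gamma> by (simp add: SD_iff sig_def)
  have p0: "sd_inv (?t, \<gamma>) \<in> SD_over ?t"
    using sd_inv_in_SD[OF t\<gamma>] d_fst_sd_inv[OF t\<gamma>] by (simp add: SD_over_def)
  have box: "box_integral ?t (Delta_right y) U W = box_mass ?t U W"
    if "y \<in> {?t, x}" "open U" "open W" for y U W
    using box_mass_eq_box_integral[OF that(2,3), of y] that(1) by auto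
  have "Delta_right ?t (sd_inv (?t, \<gamma>)) = Delta_right x (sd_inv (?t, \<gamma>))"
    using box_weight_le[OF p0 _ _ _ _ box box, of ?t x] box_weight_le[OF p0 _ _ _ _ box box, of x ?t]
    using continuous_on_Delta_right[of ?t] continuous_on_Delta_right[of x]
      Delta_right_pos[of _ ?t] Delta_right_pos[of _ x]
    by (auto intro: antisym)
  then show ?thesis
    using G.r_mult_self[of ?t] by (simp add: Delta_right_def sd_inv_sd_inv[OF t\<gamma>])
qed

end

theorem mainTheorem2:
  fixes multGa :: "'g::t2_space \<Rightarrow> 'g \<Rightarrow> 'g" and invGa :: "'g \<Rightarrow> 'g"
    and lam :: "'g \<Rightarrow> 'g measure"
    and multG :: "'a::t2_space \<Rightarrow> 'a \<Rightarrow> 'a" and invG :: "'a \<Rightarrow> 'a"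
    and nu :: "'a \<Rightarrow> 'a measure"
    and rho :: "'a \<Rightarrow> 'g" and act :: "'g \<Rightarrow> 'a \<Rightarrow> 'a"
    and Delta :: "'a \<Rightarrow> 'g \<Rightarrow> real"
  assumes "lcH_groupoid multGa invGa" and "sigma_compact_type TYPE('g)"
    and "haar_system multGa invGa lam"
    and "lcH_groupoid multG invG" and "sigma_compact_type TYPE('a)"
    and "haar_system multG invG nu"
    and "haar_morphism multGa invGa lam multG invG nu rho act Delta"
  shows "\<forall>(x, \<gamma>) \<in> semidirect_h multGa invGa multG invG rho.
           Delta x \<gamma> = Delta (g_r multG invG x) \<gamma>"
proof -
  interpret modular_morphism multG invG nu multGa invGa lam rho act Delta
    using assms(1,3,4,6,7) by (intro modular_morphism.intro haar_groupoid.intro modular_morphism_axioms.intro)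
  show ?thesis
    using Delta_eq_Delta_r by (auto simp: SD_def)
qed

end
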